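(* Let $R$ be a ring and $M$ a left $R$-module. Then $\mathcal N_s(M)\subseteq\langle E_M(0)\rangle\subseteq\beta_{co}(M)$.
   Context: Rings are associative with identity; modules are unital left modules. $\mathcal N_s(M)$ is the set of strongly nilpotent elements of $M$: $m$ is strongly nilpotent if $m=\sum_{i=1}^r a_im_i$ for some $a_i\in R$, $m_i\in M$, $r\in\mathbb N$ such that for every $i$ and every sequence $a_{i1},a_{i2},\dots$ with $a_{i1}=a_i$ and $a_{i,n+1}\in a_{in}Ra_{in}$ for all $n$, there is $k$ with $a_{ik}Rm_i=0$. $E_M(0)=\{rm: r\in R,m\in M, r^km=0\text{ for some }k\in\mathbb N\}$, $\langle E_M(0)\rangle$ the submodule generated. A submodule $P$ is completely prime if $RM\not\subseteq P$ and $rm\in P$ implies $m\in P$ or $rM\subseteq P$; $\beta_{co}(M)$ is the intersection of all completely prime submodules ($=M$ if none). *)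

theory Defs
  imports Main
begin

definition lmodule :: "('r::ring_1 \<Rightarrow> 'm::ab_group_add \<Rightarrow> 'm) \<Rightarrow> bool" where
  "lmodule smult \<longleftrightarrow>
     (\<forall>a x y. smult a (x + y) = smult a x + smult a y) \<and>
     (\<forall>a b x. smult (a + b) x = smult a x + smult b x) \<and>
     (\<forall>a b x. smult (a * b) x = smult a (smult b x)) \<and>
     (\<forall>x. smult 1 x = x)"

definition submodule :: "('r::ring_1 \<Rightarrow> 'm::ab_group_add \<Rightarrow> 'm) \<Rightarrow> 'm set \<Rightarrow> bool" where
  "submodule smult N \<longleftrightarrow>
     0 \<in> N \<and> (\<forall>x\<in>N. \<forall>y\<in>N. x + y \<in> N) \<and> (\<forall>a. \<forall>x\<in>N. smult a x \<in> N)"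

definition gen_submodule :: "('r::ring_1 \<Rightarrow> 'm::ab_group_add \<Rightarrow> 'm) \<Rightarrow> 'm set \<Rightarrow> 'm set" where
  "gen_submodule smult S = \<Inter>{N. submodule smult N \<and> S \<subseteq> N}"

definition E_zero :: "('r::ring_1 \<Rightarrow> 'm::ab_group_add \<Rightarrow> 'm) \<Rightarrow> 'm set" where
  "E_zero smult = {smult r m | r m. \<exists>k::nat. smult (r ^ k) m = 0}"

text \<open>Strongly nilpotent elements N_s(M). Sequences are indexed from 0 instead of 1.\<close>
definition strongly_nilpotent :: "('r::ring_1 \<Rightarrow> 'm::ab_group_add \<Rightarrow> 'm) \<Rightarrow> 'm \<Rightarrow> bool" where
  "strongly_nilpotent smult m \<longleftrightarrow>
     (\<exists>(r::nat) (a::nat \<Rightarrow> 'r) (ms::nat \<Rightarrow> 'm).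
        m = (\<Sum>i<r. smult (a i) (ms i)) \<and>
        (\<forall>i<r. \<forall>s::nat \<Rightarrow> 'r.
            s 0 = a i \<and> (\<forall>n. s (Suc n) \<in> {s n * x * s n | x. True}) \<longrightarrow>
            (\<exists>k. \<forall>x. smult (s k * x) (ms i) = 0)))"

definition Ns :: "('r::ring_1 \<Rightarrow> 'm::ab_group_add \<Rightarrow> 'm) \<Rightarrow> 'm set" where
  "Ns smult = {m. strongly_nilpotent smult m}"

definition completely_prime :: "('r::ring_1 \<Rightarrow> 'm::ab_group_add \<Rightarrow> 'm) \<Rightarrow> 'm set \<Rightarrow> bool" where
  "completely_prime smult P \<longleftrightarrow>
     submodule smult P \<and>
     \<not> ({smult r m | r m. True} \<subseteq> P) \<and>
     (\<forall>r m. smult r m \<in> P \<longrightarrow> m \<in> P \<or> (\<forall>m'. smult r m' \<in> P))"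

text \<open>beta_co(M): intersection of all completely prime submodules
  (the empty intersection is UNIV, i.e. M).\<close>
definition beta_co :: "('r::ring_1 \<Rightarrow> 'm::ab_group_add \<Rightarrow> 'm) \<Rightarrow> 'm set" where
  "beta_co smult = \<Inter>{P. completely_prime smult P}"

end

theory Submission
  imports Defs
begin

text \<open>Choosing the sequence \<open>a, a\<^sup>2, a\<^sup>4, \<dots>\<close> in the definition of strong nilpotence shows
  that each summand \<open>a\<^sub>i m\<^sub>i\<close> of a strongly nilpotent element satisfies \<open>a\<^sub>i^(2^k) m\<^sub>i = 0\<close> for some \<open>k\<close>, so it
  lies in \<open>E\<^sub>M(0)\<close>. Conversely, if \<open>r\<^sup>k m = 0\<close> then peeling off one factor \<open>r\<close> at a time in a
  completely prime submodule \<open>P\<close> gives \<open>m \<in> P\<close> or \<open>r m \<in> P\<close>; either way \<open>r m \<in> P\<close>.\<close>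

lemma submodule_sum:
  assumes "submodule smult N" "\<And>i. i < (r::nat) \<Longrightarrow> f i \<in> N"
  shows "(\<Sum>i<r. f i) \<in> N"
  using assms(2) by (induction r) (use assms(1) in \<open>simp_all add: submodule_def\<close>)

lemma gen_submodule_least:
  assumes "submodule smult N" "S \<subseteq> N"
  shows "gen_submodule smult S \<subseteq> N"
  using assms unfolding gen_submodule_def by blast

lemma sum_in_gen_submodule:
  assumes "\<And>i. i < (r::nat) \<Longrightarrow> f i \<in> S"
  shows "(\<Sum>i<r. f i) \<in> gen_submodule smult S"
  unfolding gen_submodule_def using assms by (blast intro: submodule_sum)

lemma power_two_power_Suc_sandwich:
  fixes a :: "'r::ring_1"
  shows "a ^ 2 ^ Suc n \<in> {a ^ 2 ^ n * x * a ^ 2 ^ n | x. True}"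
proof -
  have "a ^ 2 ^ Suc n = a ^ 2 ^ n * 1 * a ^ 2 ^ n"
    by (simp add: power_add[symmetric] mult_2)
  then show ?thesis by blast
qed

lemma E_zero_if_sandwich_sequences_annihilate:
  assumes "\<forall>s. s 0 = a \<and> (\<forall>n. s (Suc n) \<in> {s n * x * s n | x. True}) \<longrightarrow>
             (\<exists>k. \<forall>x. smult (s k * x) m = 0)"
  shows "smult a m \<in> E_zero smult"
proof -
  obtain k where "\<forall>x. smult (a ^ 2 ^ k * x) m = 0"
    using assms[rule_format, of "\<lambda>n. a ^ 2 ^ n"] power_two_power_Suc_sandwich by auto
  then have "smult (a ^ 2 ^ k) m = 0"
    by (metis mult.right_neutral)
  then show ?thesis
    unfolding E_zero_def by blast
qed

lemma Ns_subset_gen_submodule_E_zero: "Ns smult \<subseteq> gen_submodule smult (E_zero smult)"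
proof
  fix m assume "m \<in> Ns smult"
  then have "strongly_nilpotent smult m"
    by (simp add: Ns_def)
  then obtain r a ms where m: "m = (\<Sum>i<(r::nat). smult (a i) (ms i))" and
    annihilate: "\<forall>i<r. \<forall>s. s 0 = a i \<and> (\<forall>n. s (Suc n) \<in> {s n * x * s n | x. True}) \<longrightarrow>
                  (\<exists>k. \<forall>x. smult (s k * x) (ms i) = 0)"
    unfolding strongly_nilpotent_def by blast
  show "m \<in> gen_submodule smult (E_zero smult)"
    unfolding m using annihilate
    by (intro sum_in_gen_submodule E_zero_if_sandwich_sequences_annihilate) blast
qed

lemma completely_prime_power_smult:
  assumes "lmodule smult" "completely_prime smult P" "smult (r ^ k) m \<in> P"
  shows "m \<in> P \<or> smult r m \<in> P"
  using assms(3)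
proof (induction k arbitrary: m)
  case 0
  then show ?case using assms(1) by (simp add: lmodule_def)
next
  case (Suc k)
  have "smult r (smult (r ^ k) m) \<in> P"
    using Suc.prems assms(1) by (simp add: lmodule_def)
  then have "smult (r ^ k) m \<in> P \<or> (\<forall>m'. smult r m' \<in> P)"
    using assms(2) unfolding completely_prime_def by blast
  then show ?case using Suc.IH by blast
qed

lemma E_zero_subset_completely_prime:
  assumes "lmodule smult" "completely_prime smult P"
  shows "E_zero smult \<subseteq> P"
proof
  have sub: "submodule smult P"
    using assms(2) by (simp add: completely_prime_def)
  fix x assume "x \<in> E_zero smult"
  then obtain r m k where x: "x = smult r m" and "smult (r ^ k) m = 0"
    unfolding E_zero_def by blast
  then have "smult (r ^ k) m \<in> P"
    using sub by (simp add: submodule_def)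
  then have "m \<in> P \<or> smult r m \<in> P"
    using completely_prime_power_smult[OF assms] by blast
  then show "x \<in> P"
    using sub x by (auto simp: submodule_def)
qed

lemma gen_submodule_E_zero_subset_beta_co:
  assumes "lmodule smult"
  shows "gen_submodule smult (E_zero smult) \<subseteq> beta_co smult"
  unfolding beta_co_def
proof (rule Inter_greatest)
  fix P assume "P \<in> {P. completely_prime smult P}"
  then have "completely_prime smult P" by simp
  then show "gen_submodule smult (E_zero smult) \<subseteq> P"
    using gen_submodule_least E_zero_subset_completely_prime[OF assms]
    unfolding completely_prime_def by blast
qed

theorem lemma4p9:
  fixes smult :: "'r::ring_1 \<Rightarrow> 'm::ab_group_add \<Rightarrow> 'm"
  assumes "lmodule smult"
  shows "Ns smult \<subseteq> gen_submodule smult (E_zero smult)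
       \<and> gen_submodule smult (E_zero smult) \<subseteq> beta_co smult"
  using Ns_subset_gen_submodule_E_zero gen_submodule_E_zero_subset_beta_co[OF assms] by blast

end
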